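(* The subspace $\textbf{I}_\textsf{P}$ is a homogeneous bi-ideal of $(\textbf{W}, \nabla_{\sqcup\!\sqcup}, \iota_{\sqcup\!\sqcup}, \Delta_\odot, \epsilon_\odot)$. The quotient bialgebra ${\textbf{W}}_\textsf{P} = \textbf{W} /\textbf{I}_\textsf{P}$ is a graded Hopf algebra.
   Context: Let $\Bbbk$ be a field. A word is a finite sequence of positive integers; $\ell(w)$ is its length. For a word $w=w_1\cdots w_m$ with $\max(w)\le n\in\mathbb{N}$, $[w,n]$ denotes the linear endomorphism of the shuffle algebra (span of all words) sending a word $v$ of length $n$ to $v_{w_1}\cdots v_{w_m}$ and other words to $0$; $\mathbb{W}$ is the set of all such $[w,n]$ and $\textbf{W}$ their span, graded by $\deg [w,n]=\ell(w)$. $\textbf{W}$ is a graded bialgebra with product $\nabla_{\sqcup\!\sqcup}([v,m]\otimes[w,n]) = [v\sqcup\!\sqcup (w\uparrow m), m+n]$ ($\sqcup\!\sqcup$ the shuffle product of words, $w\uparrow m$ adds $m$ to each letter), unit $\iota_{\sqcup\!\sqcup}(1)=[\emptyset,0]$, coproduct $\Delta_\odot([w,n])=\sum_{i=0}^m [w_1\cdots w_i,n]\otimes[w_{i+1}\cdots w_m,n]$ and counit $\epsilon_\odot([w,n])=1$ if $w=\emptyset$, else $0$. For a word $w$ whose set of letters $S$ has $m$ elements, $\operatorname{fl}(w)$ is obtained by applying the order-preserving bijection $S\to\{1,\dots,m\}$ to each letter. $\textbf{I}_\textsf{P}$ is the subspace of $\textbf{W}$ spanned by all differences $[v,m]-[w,n]$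 with $[v,m],[w,n]\in\mathbb{W}$ and $\operatorname{fl}(v)=\operatorname{fl}(w)$. *)

theory Defs
  imports Main "HOL-Library.Multiset" "HOL-Library.Function_Algebras"
begin

text \<open>Basis elements [w,n] of W are encoded as pairs (w,n) with w a word of
positive integers and max(w) \<le> n.  Vectors are finitely supported functions
from keys to the field.  Tensor products of free spaces are functions on
pairs of keys.\<close>

type_synonym key = "nat list \<times> nat"

definition Wbasis :: "key set" where
  "Wbasis = {(w, n). \<forall>a\<in>set w. 0 < a \<and> a \<le> n}"

definition deg :: "key \<Rightarrow> nat" where
  "deg b = length (fst b)"

definition supp :: "('a \<Rightarrow> 'k::zero) \<Rightarrow> 'a set" where
  "supp f = {x. f x \<noteq> 0}"

definition delta :: "'a \<Rightarrow> 'a \<Rightarrow> 'k::{zero,one}" where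
  "delta b = (\<lambda>c. if c = b then 1 else 0)"

definition smul :: "'k::times \<Rightarrow> ('a \<Rightarrow> 'k) \<Rightarrow> 'a \<Rightarrow> 'k" where
  "smul c f = (\<lambda>x. c * f x)"

definition lin :: "('a \<Rightarrow> 'b \<Rightarrow> 'k::semiring_0) \<Rightarrow> ('a \<Rightarrow> 'k) \<Rightarrow> 'b \<Rightarrow> 'k" where
  "lin F x = (\<lambda>c. \<Sum>b\<in>supp x. x b * F b c)"

definition Wsp :: "(key \<Rightarrow> 'k::field) set" where
  "Wsp = {f. finite (supp f) \<and> supp f \<subseteq> Wbasis}"

definition tens :: "('a \<Rightarrow> 'k::times) \<Rightarrow> ('b \<Rightarrow> 'k) \<Rightarrow> ('a \<times> 'b \<Rightarrow> 'k)" where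
  "tens x y = (\<lambda>(a, b). x a * y b)"

definition span_fun :: "('a \<Rightarrow> 'k::field) set \<Rightarrow> ('a \<Rightarrow> 'k) set" where
  "span_fun G = {x. \<exists>A c. finite A \<and> A \<subseteq> G \<and> x = (\<Sum>g\<in>A. smul (c g) g)}"

fun shuf :: "'a list \<Rightarrow> 'a list \<Rightarrow> 'a list multiset" where
  "shuf [] w = {#w#}"
| "shuf v [] = {#v#}"
| "shuf (a # v) (b # w) =
     image_mset ((#) a) (shuf v (b # w)) + image_mset ((#) b) (shuf (a # v) w)"

definition shift :: "nat \<Rightarrow> nat list \<Rightarrow> nat list" where
  "shift m w = map (\<lambda>a. a + m) w"

definition mu_b :: "key \<times> key \<Rightarrow> key \<Rightarrow> 'k::field" where
  "mu_b p = (case p of ((v, m), (w, n)) \<Rightarrow>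
     (\<lambda>(u, k). if k = m + n then of_nat (count (shuf v (shift m w)) u) else 0))"

definition nabla :: "(key \<times> key \<Rightarrow> 'k::field) \<Rightarrow> key \<Rightarrow> 'k" where
  "nabla z = lin mu_b z"

definition iota :: "'k::field \<Rightarrow> key \<Rightarrow> 'k" where
  "iota c = smul c (delta ([], 0))"

definition Delta_b :: "key \<Rightarrow> key \<times> key \<Rightarrow> 'k::field" where
  "Delta_b b = (case b of (w, n) \<Rightarrow>
     (\<Sum>i\<le>length w. delta ((take i w, n), (drop i w, n))))"

definition Delta :: "(key \<Rightarrow> 'k::field) \<Rightarrow> key \<times> key \<Rightarrow> 'k" where
  "Delta x = lin Delta_b x"

definition eps :: "(key \<Rightarrow> 'k::field) \<Rightarrow> 'k" where
  "eps x = (\<Sum>b\<in>supp x. x b * (if fst b = [] then 1 else 0))"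

text \<open>Standardization fl: the order-preserving bijection from the letter set S
to {1..|S|} sends a to the number of letters of S that are \<le> a.\<close>
definition fl :: "nat list \<Rightarrow> nat list" where
  "fl w = map (\<lambda>a. card {b \<in> set w. b \<le> a}) w"

definition I_P :: "(key \<Rightarrow> 'k::field) set" where
  "I_P = span_fun {delta (v, m) - delta (w, n) | v m w n.
                    (v, m) \<in> Wbasis \<and> (w, n) \<in> Wbasis \<and> fl v = fl w}"

definition proj_deg :: "nat \<Rightarrow> (key \<Rightarrow> 'k::zero) \<Rightarrow> key \<Rightarrow> 'k" where
  "proj_deg d x = (\<lambda>b. if deg b = d then x b else 0)"

definition homogeneous_subspace :: "(key \<Rightarrow> 'k::field) set \<Rightarrow> bool" where
  "homogeneous_subspace I \<longleftrightarrow> (\<forall>x\<in>I. \<forall>d. proj_deg d x \<in> I)"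

definition bi_ideal :: "(key \<Rightarrow> 'k::field) set \<Rightarrow> bool" where
  "bi_ideal I \<longleftrightarrow>
     I \<subseteq> Wsp \<and>
     (\<forall>x\<in>I. \<forall>y\<in>Wsp. nabla (tens x y) \<in> I \<and> nabla (tens y x) \<in> I) \<and>
     (\<forall>x\<in>I. Delta x \<in> span_fun ({tens a b | a b. a \<in> I \<and> b \<in> Wsp} \<union>
                                   {tens a b | a b. a \<in> Wsp \<and> b \<in> I})) \<and>
     (\<forall>x\<in>I. eps x = 0)"

definition map_tens :: "(key \<Rightarrow> key \<Rightarrow> 'k::field) \<Rightarrow> (key \<Rightarrow> key \<Rightarrow> 'k)
    \<Rightarrow> (key \<times> key \<Rightarrow> 'k) \<Rightarrow> key \<times> key \<Rightarrow> 'k" where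
  "map_tens S T z = lin (\<lambda>(a, b). tens (S a) (T b)) z"

text \<open>The quotient W/I is a graded Hopf algebra: there is a linear, degree
preserving map S on W (given on the basis) with S(I) \<subseteq> I that induces an
antipode on W/I, i.e. the antipode identities hold modulo I.\<close>
definition quotient_graded_hopf :: "(key \<Rightarrow> 'k::field) set \<Rightarrow> bool" where
  "quotient_graded_hopf I \<longleftrightarrow>
     (\<exists>S :: key \<Rightarrow> key \<Rightarrow> 'k.
        (\<forall>b\<in>Wbasis. S b \<in> Wsp \<and> (\<forall>c\<in>supp (S b). deg c = deg b)) \<and>
        (\<forall>x\<in>I. lin S x \<in> I) \<and>
        (\<forall>x\<in>Wsp. nabla (map_tens S delta (Delta x)) - iota (eps x) \<in> I \<and>
                  nabla (map_tens delta S (Delta x)) - iota (eps x) \<in> I))"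

end

theory Submission
  imports Defs
begin

(* Two words v and w have the same standardization iff the pairs of letters at equal positions,
   set (zip v w), are order compatible.  Shuffling such pairs position by position shows that the
   product of a generator [v,m] - [w,n] of I_P with a basis element is a sum of generators, and
   deconcatenation splits a generator into generators tensored with basis elements; generators are
   homogeneous and killed by the counit.

   The antipode is given by the recursion S[w,n] = - sum_{i<|w|} S[w_1..w_i,n] [w_{i+1}..w_m,n],
   which makes S a left convolution inverse of the identity modulo I_P, since the product
   [u,k][(),n] = [u,k+n] is congruent to [u,k].  Associativity of the shuffle product and
   coassociativity of deconcatenation give (id * S) * id = id * (S * id), which is congruent to id;
   by induction on the length this forces id * S to be congruent to the unit-counit as well. *)

lemma sum_fun_apply: "sum f A x = (\<Sum>a\<in>A. f a x)"
  by (induction A rule: infinite_finite_induct) auto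

lemma smul_apply: "smul c f x = c * f x"
  by (simp add: smul_def)

lemma tens_apply [simp]: "tens x y (a, b) = x a * y b"
  by (simp add: tens_def)

lemma supp_iff [simp]: "a \<in> supp f \<longleftrightarrow> f a \<noteq> 0"
  by (simp add: supp_def)

lemma supp_delta [simp]: "supp (delta b :: _ \<Rightarrow> 'k::zero_neq_one) = {b}"
  by (auto simp: supp_def delta_def)

lemma supp_zero [simp]: "supp (0 :: _ \<Rightarrow> 'k::zero) = {}"
  by (auto simp: supp_def)

lemma supp_add: "supp (x + y) \<subseteq> supp x \<union> supp (y :: _ \<Rightarrow> 'k::monoid_add)"
  by (auto simp: supp_def)

lemma supp_diff: "supp (x - y) \<subseteq> supp x \<union> supp (y :: _ \<Rightarrow> 'k::group_add)"
  by (auto simp: supp_def)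

lemma supp_uminus [simp]: "supp (- x) = supp (x :: _ \<Rightarrow> 'k::group_add)"
  by (simp add: supp_def)

lemma supp_smul: "supp (smul c x) \<subseteq> supp (x :: _ \<Rightarrow> 'k::mult_zero)"
  by (auto simp: supp_def smul_def)

lemma supp_sum: "supp (sum f A) \<subseteq> (\<Union>a\<in>A. supp (f a :: _ \<Rightarrow> 'k::comm_monoid_add))"
  by (auto simp: supp_def sum_fun_apply intro: ccontr dest: sum.neutral)

lemma supp_tens: "supp (tens x y) \<subseteq> supp x \<times> supp (y :: _ \<Rightarrow> 'k::mult_zero)"
  by (auto simp: supp_def)

lemma finite_supp_add:
  "finite (supp x) \<Longrightarrow> finite (supp y) \<Longrightarrow> finite (supp (x + y :: _ \<Rightarrow> 'k::monoid_add))"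
  by (rule finite_subset[OF supp_add]) simp

lemma finite_supp_diff:
  "finite (supp x) \<Longrightarrow> finite (supp y) \<Longrightarrow> finite (supp (x - y :: _ \<Rightarrow> 'k::group_add))"
  by (rule finite_subset[OF supp_diff]) simp

lemma finite_supp_smul: "finite (supp x) \<Longrightarrow> finite (supp (smul c x :: _ \<Rightarrow> 'k::mult_zero))"
  by (rule finite_subset[OF supp_smul])

lemma finite_supp_sum:
  "(\<And>a. a \<in> A \<Longrightarrow> finite (supp (f a))) \<Longrightarrow> finite (supp (sum f A :: _ \<Rightarrow> 'k::comm_monoid_add))"
  by (induction A rule: infinite_finite_induct) (auto intro: finite_supp_add)

lemma finite_supp_sum_mset:
  "(\<And>a. finite (supp (f a))) \<Longrightarrow> finite (supp (\<Sum>a\<in>#M. f a :: _ \<Rightarrow> 'k::comm_monoid_add))"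
  by (induction M) (auto intro: finite_supp_add)

lemma finite_supp_tens:
  "finite (supp x) \<Longrightarrow> finite (supp y) \<Longrightarrow> finite (supp (tens x y :: _ \<Rightarrow> 'k::mult_zero))"
  by (rule finite_subset[OF supp_tens]) simp

lemma smul_diff: "smul c (x - y) = smul c x - smul c (y :: _ \<Rightarrow> 'k::ring)"
  by (auto simp: fun_eq_iff smul_def right_diff_distrib)

lemma smul_sum: "smul c (sum f A) = (\<Sum>a\<in>A. smul c (f a :: _ \<Rightarrow> 'k::semiring_0))"
  by (auto simp: fun_eq_iff smul_def sum_fun_apply sum_distrib_left)

lemma sum_smul: "smul (\<Sum>a\<in>A. c a) x = (\<Sum>a\<in>A. smul (c a) (x :: _ \<Rightarrow> 'k::semiring_0))"
  by (auto simp: fun_eq_iff smul_def sum_fun_apply sum_distrib_right)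

lemma smul_smul: "smul c (smul d x) = smul (c * d) (x :: _ \<Rightarrow> 'k::semigroup_mult)"
  by (auto simp: fun_eq_iff smul_def mult.assoc)

lemma smul_one [simp]: "smul 1 x = (x :: _ \<Rightarrow> 'k::monoid_mult)"
  by (auto simp: fun_eq_iff smul_def)

lemma smul_zero_left [simp]: "smul 0 x = (0 :: _ \<Rightarrow> 'k::mult_zero)"
  by (auto simp: fun_eq_iff smul_def)

lemma smul_minus_one: "smul (- 1) x = - (x :: _ \<Rightarrow> 'k::ring_1)"
  by (auto simp: fun_eq_iff smul_def)

lemma tens_add_left: "tens (x + x') y = tens x y + tens x' (y :: _ \<Rightarrow> 'k::semiring)"
  by (auto simp: tens_def distrib_right fun_eq_iff)

lemma tens_add_right: "tens x (y + y') = tens x y + tens x (y' :: _ \<Rightarrow> 'k::semiring)"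
  by (auto simp: tens_def distrib_left fun_eq_iff)

lemma tens_diff_left: "tens (x - x') y = tens x y - tens x' (y :: _ \<Rightarrow> 'k::ring)"
  by (auto simp: tens_def left_diff_distrib fun_eq_iff)

lemma tens_diff_right: "tens x (y - y') = tens x y - tens x (y' :: _ \<Rightarrow> 'k::ring)"
  by (auto simp: tens_def right_diff_distrib fun_eq_iff)

lemma tens_smul_left: "tens (smul c x) y = smul c (tens x (y :: _ \<Rightarrow> 'k::comm_ring))"
  by (auto simp: tens_def smul_def fun_eq_iff ac_simps)

lemma tens_smul_right: "tens x (smul c y) = smul c (tens x (y :: _ \<Rightarrow> 'k::comm_ring))"
  by (auto simp: tens_def smul_def fun_eq_iff ac_simps)

lemma tens_delta: "tens (delta a) (delta b) = (delta (a, b) :: _ \<Rightarrow> 'k::comm_ring_1)"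
  by (auto simp: tens_def delta_def fun_eq_iff)

lemma finsupp_expansion:
  assumes "finite (supp x)"
  shows "x = (\<Sum>b\<in>supp x. smul (x b) (delta b :: _ \<Rightarrow> 'k::comm_ring_1))"
proof
  fix a
  have "(\<Sum>b\<in>supp x. smul (x b) (delta b) a) = (\<Sum>b\<in>supp x. if a = b then x b else 0)"
    by (rule sum.cong) (auto simp: smul_def delta_def)
  then show "x a = (\<Sum>b\<in>supp x. smul (x b) (delta b)) a"
    using assms by (simp add: sum_fun_apply)
qed

definition fin_linear :: "(('a \<Rightarrow> 'k::comm_ring_1) \<Rightarrow> 'b \<Rightarrow> 'k) \<Rightarrow> bool" where
  "fin_linear f \<longleftrightarrow>
     (\<forall>x y. finite (supp x) \<longrightarrow> finite (supp y) \<longrightarrow> f (x + y) = f x + f y) \<and>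
     (\<forall>c x. finite (supp x) \<longrightarrow> f (smul c x) = smul c (f x))"

lemma fin_linearI:
  assumes "\<And>x y. finite (supp x) \<Longrightarrow> finite (supp y) \<Longrightarrow> f (x + y) = f x + f y"
    and "\<And>c x. finite (supp x) \<Longrightarrow> f (smul c x) = smul c (f x)"
  shows "fin_linear f"
  using assms by (simp add: fin_linear_def)

lemma fin_linear_add:
  "fin_linear f \<Longrightarrow> finite (supp x) \<Longrightarrow> finite (supp y) \<Longrightarrow> f (x + y) = f x + f y"
  by (simp add: fin_linear_def)

lemma fin_linear_smul: "fin_linear f \<Longrightarrow> finite (supp x) \<Longrightarrow> f (smul c x) = smul c (f x)"
  by (simp add: fin_linear_def)

lemma fin_linear_zero: "fin_linear f \<Longrightarrow> f 0 = 0"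
  using fin_linear_smul[of f 0 0] by simp

lemma fin_linear_diff:
  assumes "fin_linear f" "finite (supp x)" "finite (supp y)"
  shows "f (x - y) = f x - f y"
proof -
  have "f (x + smul (- 1) y) = f x + f (smul (- 1) y)"
    using assms by (intro fin_linear_add finite_supp_smul)
  also have "f (smul (- 1) y) = smul (- 1) (f y)"
    using assms by (intro fin_linear_smul)
  finally show ?thesis
    by (simp only: smul_minus_one diff_conv_add_uminus)
qed

lemma fin_linear_sum:
  assumes "fin_linear f" "\<And>a. a \<in> A \<Longrightarrow> finite (supp (g a))"
  shows "f (sum g A) = (\<Sum>a\<in>A. f (g a))"
  using assms(2)
proof (induction A rule: infinite_finite_induct)
  case (insert a A)
  have "f (sum g (insert a A)) = f (g a + sum g A)"
    using insert.hyps by simp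
  also have "\<dots> = f (g a) + f (sum g A)"
    using insert.prems by (intro fin_linear_add[OF assms(1)] finite_supp_sum) auto
  also have "f (sum g A) = (\<Sum>a\<in>A. f (g a))"
    using insert.IH insert.prems by blast
  also have "f (g a) + (\<Sum>a\<in>A. f (g a)) = (\<Sum>a\<in>insert a A. f (g a))"
    using insert.hyps by simp
  finally show ?case .
qed (metis fin_linear_zero[OF assms(1)] sum.infinite sum.empty)+

lemma fin_linear_sum_mset:
  assumes "fin_linear f" "\<And>a. finite (supp (g a))"
  shows "f (\<Sum>a\<in>#M. g a) = (\<Sum>a\<in>#M. f (g a))"
proof (induction M)
  case (add a M)
  have "f (\<Sum>b\<in>#add_mset a M. g b) = f (g a + (\<Sum>b\<in>#M. g b))"
    by simp
  also have "\<dots> = f (g a) + f (\<Sum>b\<in>#M. g b)"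
    using assms(2) by (intro fin_linear_add[OF assms(1)] finite_supp_sum_mset)
  also have "f (g a) + f (\<Sum>b\<in>#M. g b) = (\<Sum>b\<in>#add_mset a M. f (g b))"
    using add by simp
  finally show ?case .
qed (metis fin_linear_zero[OF assms(1)] image_mset_empty sum_mset.empty)

lemma fin_linear_expansion:
  assumes "fin_linear f" "finite (supp x)"
  shows "f x = (\<Sum>b\<in>supp x. smul (x b) (f (delta b)))"
proof -
  have "f x = f (\<Sum>b\<in>supp x. smul (x b) (delta b))"
    using finsupp_expansion[OF assms(2)] by simp
  also have "\<dots> = (\<Sum>b\<in>supp x. f (smul (x b) (delta b)))"
    by (rule fin_linear_sum[OF assms(1)]) (simp add: finite_supp_smul)
  finally show ?thesis
    by (simp add: fin_linear_smul[OF assms(1)])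
qed

lemma fin_linear_eq_on_delta:
  assumes "fin_linear f" "fin_linear g" "finite (supp x)" "\<And>b. f (delta b) = g (delta b)"
  shows "f x = g x"
  using assms by (simp add: fin_linear_expansion[OF assms(1,3)] fin_linear_expansion[OF assms(2,3)])

lemma fin_linear_comp:
  fixes g :: "('a \<Rightarrow> 'k::comm_ring_1) \<Rightarrow> 'b \<Rightarrow> 'k"
  assumes "fin_linear f" "fin_linear g" "\<And>x. finite (supp x) \<Longrightarrow> finite (supp (g x))"
  shows "fin_linear (\<lambda>x. f (g x))"
proof (rule fin_linearI)
  fix x y :: "'a \<Rightarrow> 'k" assume fin: "finite (supp x)" "finite (supp y)"
  have "f (g (x + y)) = f (g x + g y)"
    using fin by (simp only: fin_linear_add[OF assms(2)])
  also have "\<dots> = f (g x) + f (g y)"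
    using fin by (intro fin_linear_add[OF assms(1)] assms(3))
  finally show "f (g (x + y)) = f (g x) + f (g y)" .
next
  fix c and x :: "'a \<Rightarrow> 'k" assume fin: "finite (supp x)"
  have "f (g (smul c x)) = f (smul c (g x))"
    using fin by (simp only: fin_linear_smul[OF assms(2)])
  also have "\<dots> = smul c (f (g x))"
    using fin by (intro fin_linear_smul[OF assms(1)] assms(3))
  finally show "f (g (smul c x)) = smul c (f (g x))" .
qed

lemma lin_eq_sum:
  assumes "finite A" "supp z \<subseteq> A"
  shows "lin F z = (\<Sum>b\<in>A. smul (z b) (F b))"
proof -
  have "(\<Sum>b\<in>supp z. z b * F b c) = (\<Sum>b\<in>A. z b * F b c)" for c
    by (rule sum.mono_neutral_left) (use assms in auto)
  then show ?thesis
    by (auto simp: lin_def fun_eq_iff sum_fun_apply smul_apply)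
qed

lemma fin_linear_lin: "fin_linear (lin F :: ('a \<Rightarrow> 'k::comm_ring_1) \<Rightarrow> 'b \<Rightarrow> 'k)"
proof (rule fin_linearI)
  fix x y :: "'a \<Rightarrow> 'k" assume fin: "finite (supp x)" "finite (supp y)"
  let ?A = "supp x \<union> supp y"
  have "lin F (x + y) = (\<Sum>b\<in>?A. smul ((x + y) b) (F b))"
    by (rule lin_eq_sum) (use fin supp_add in auto)
  moreover have "lin F x = (\<Sum>b\<in>?A. smul (x b) (F b))" "lin F y = (\<Sum>b\<in>?A. smul (y b) (F b))"
    by (rule lin_eq_sum; use fin in auto)+
  ultimately show "lin F (x + y) = lin F x + lin F y"
    by (simp add: sum.distrib[symmetric] fun_eq_iff sum_fun_apply smul_apply distrib_right)
next
  fix c :: 'k and x :: "'a \<Rightarrow> 'k" assume fin: "finite (supp x)"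
  have "lin F (smul c x) = (\<Sum>b\<in>supp x. smul (smul c x b) (F b))"
    by (rule lin_eq_sum) (use fin supp_smul[of c x] in auto)
  also have "\<dots> = smul c (\<Sum>b\<in>supp x. smul (x b) (F b))"
    unfolding smul_sum by (simp add: smul_smul smul_apply)
  also have "(\<Sum>b\<in>supp x. smul (x b) (F b)) = lin F x"
    by (rule lin_eq_sum[symmetric]) (use fin in auto)
  finally show "lin F (smul c x) = smul c (lin F x)" .
qed

lemma lin_delta [simp]: "lin F (delta b) = (F b :: _ \<Rightarrow> 'k::comm_ring_1)"
  by (subst lin_eq_sum[of "{b}"]) (auto simp: delta_def split: if_splits)

lemmas lin_add = fin_linear_add[OF fin_linear_lin]
lemmas lin_sum = fin_linear_sum[OF fin_linear_lin]

lemma finite_supp_lin: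
  assumes "finite (supp x)" "\<And>b. b \<in> supp x \<Longrightarrow> finite (supp (F b))"
  shows "finite (supp (lin F x :: _ \<Rightarrow> 'k::comm_ring_1))"
  unfolding lin_eq_sum[OF assms(1) order_refl]
  using assms(2) by (intro finite_supp_sum finite_supp_smul) simp

lemma span_fun_zero: "0 \<in> span_fun G"
  unfolding span_fun_def by (rule CollectI, rule exI[of _ "{}"]) auto

lemma span_fun_base: "g \<in> G \<Longrightarrow> g \<in> span_fun G"
  unfolding span_fun_def by (intro CollectI exI[of _ "{g}"] exI[of _ "\<lambda>_. 1"]) auto

lemma span_fun_add:
  assumes "x \<in> span_fun G" "y \<in> span_fun G"
  shows "x + y \<in> span_fun G"
proof -
  obtain A c where A: "finite A" "A \<subseteq> G" "x = (\<Sum>g\<in>A. smul (c g) g)"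
    using assms(1) unfolding span_fun_def by blast
  obtain B d where B: "finite B" "B \<subseteq> G" "y = (\<Sum>g\<in>B. smul (d g) g)"
    using assms(2) unfolding span_fun_def by blast
  have extend: "(\<Sum>g\<in>S. smul (e g) g) = (\<Sum>g\<in>A \<union> B. smul (if g \<in> S then e g else 0) g)"
    if "S \<subseteq> A \<union> B" for S e
    using that A(1) B(1) by (intro sum.mono_neutral_cong_left) auto
  define e where "e g = (if g \<in> A then c g else 0) + (if g \<in> B then d g else 0)" for g
  have "x + y = (\<Sum>g\<in>A \<union> B. smul (e g) g)"
    unfolding A(3) B(3) extend[OF Un_upper1] extend[OF Un_upper2] sum.distrib[symmetric] e_def
    by (rule sum.cong) (auto simp: fun_eq_iff smul_apply distrib_right)
  then show ?thesis
    unfolding span_fun_def using A(1,2) B(1,2) by (intro CollectI exI conjI) auto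
qed

lemma span_fun_smul:
  assumes "x \<in> span_fun G"
  shows "smul a x \<in> span_fun G"
proof -
  obtain A c where A: "finite A" "A \<subseteq> G" "x = (\<Sum>g\<in>A. smul (c g) g)"
    using assms unfolding span_fun_def by blast
  have "smul a x = (\<Sum>g\<in>A. smul (a * c g) g)"
    unfolding A(3) smul_sum by (simp add: smul_smul)
  then show ?thesis
    unfolding span_fun_def using A(1,2) by (intro CollectI exI conjI) auto
qed

lemma span_fun_diff: "x \<in> span_fun G \<Longrightarrow> y \<in> span_fun G \<Longrightarrow> x - y \<in> span_fun G"
  using span_fun_add[of x G "smul (- 1) y"] span_fun_smul[of y G "- 1"]
  by (simp add: smul_minus_one)

lemma span_fun_sum: "(\<And>a. a \<in> A \<Longrightarrow> f a \<in> span_fun G) \<Longrightarrow> sum f A \<in> span_fun G"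
  by (induction A rule: infinite_finite_induct) (auto intro: span_fun_add span_fun_zero)

lemma span_fun_sum_mset:
  "(\<And>a. a \<in># M \<Longrightarrow> f a \<in> span_fun G) \<Longrightarrow> (\<Sum>a\<in>#M. f a) \<in> span_fun G"
  by (induction M) (auto intro: span_fun_add span_fun_zero)

lemma span_fun_empty: "span_fun {} = {0}"
  by (auto simp: span_fun_def)

lemma span_fun_induct [consumes 1, case_names zero step]:
  assumes "x \<in> span_fun G" "Q 0"
    and "\<And>c g y. g \<in> G \<Longrightarrow> y \<in> span_fun G \<Longrightarrow> Q y \<Longrightarrow> Q (smul c g + y)"
  shows "Q x"
proof -
  obtain A c where A: "finite A" "A \<subseteq> G" "x = (\<Sum>g\<in>A. smul (c g) g)"
    using assms(1) unfolding span_fun_def by blast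
  have "(\<Sum>g\<in>A. smul (c g) g) \<in> span_fun G \<and> Q (\<Sum>g\<in>A. smul (c g) g)"
    using A(1,2)
  proof (induction A rule: finite_induct)
    case empty
    show ?case
      unfolding sum.empty using span_fun_zero assms(2) ..
  next
    case (insert a A)
    then have "a \<in> G" "(\<Sum>g\<in>A. smul (c g) g) \<in> span_fun G \<and> Q (\<Sum>g\<in>A. smul (c g) g)"
      by auto
    moreover have "(\<Sum>g\<in>insert a A. smul (c g) g) = smul (c a) a + (\<Sum>g\<in>A. smul (c g) g)"
      using insert.hyps by simp
    ultimately show ?case
      by (simp only:) (blast intro: span_fun_add span_fun_smul span_fun_base assms(3))
  qed
  then show ?thesis using A(3) by simp
qed

lemma lin_in_span_fun:
  assumes "finite (supp x)" "\<And>b. b \<in> supp x \<Longrightarrow> F b \<in> span_fun H"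
  shows "lin F x \<in> span_fun H"
  unfolding lin_eq_sum[OF assms(1) order_refl]
  using assms(2) by (intro span_fun_sum span_fun_smul) simp

lemma Wbasis_iff: "(w, n) \<in> Wbasis \<longleftrightarrow> (\<forall>a\<in>set w. 0 < a \<and> a \<le> n)"
  by (simp add: Wbasis_def)

lemma Wbasis_take: "(w, n) \<in> Wbasis \<Longrightarrow> (take i w, n) \<in> Wbasis"
  by (auto simp: Wbasis_iff dest: in_set_takeD)

lemma Wbasis_drop: "(w, n) \<in> Wbasis \<Longrightarrow> (drop i w, n) \<in> Wbasis"
  by (auto simp: Wbasis_iff dest: in_set_dropD)

lemma finite_supp_Wsp: "x \<in> Wsp \<Longrightarrow> finite (supp x)"
  by (simp add: Wsp_def)

lemma Wsp_supp_Wbasis: "x \<in> Wsp \<Longrightarrow> b \<in> supp x \<Longrightarrow> b \<in> Wbasis"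
  by (auto simp: Wsp_def)

lemma Wsp_delta: "b \<in> Wbasis \<Longrightarrow> delta b \<in> Wsp"
  by (simp add: Wsp_def)

lemma Wsp_add: "x \<in> Wsp \<Longrightarrow> y \<in> Wsp \<Longrightarrow> x + y \<in> Wsp"
  unfolding Wsp_def using supp_add[of x y] finite_supp_add[of x y] by blast

lemma Wsp_smul: "x \<in> Wsp \<Longrightarrow> smul c x \<in> Wsp"
  unfolding Wsp_def using supp_smul[of c x] finite_supp_smul[of x c] by blast

lemma Wsp_uminus: "x \<in> Wsp \<Longrightarrow> - x \<in> Wsp"
  using Wsp_smul[of x "- 1"] by (simp add: smul_minus_one)

lemma Wsp_diff: "x \<in> Wsp \<Longrightarrow> y \<in> Wsp \<Longrightarrow> x - y \<in> Wsp"
  using Wsp_add[of x "- y"] Wsp_uminus[of y] by simp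

lemma Wsp_zero: "0 \<in> Wsp"
  by (simp add: Wsp_def)

lemma Wsp_sum: "(\<And>a. a \<in> A \<Longrightarrow> f a \<in> Wsp) \<Longrightarrow> sum f A \<in> Wsp"
  by (induction A rule: infinite_finite_induct) (simp_all add: Wsp_zero Wsp_add)

definition I_P_gens :: "(key \<Rightarrow> 'k::field) set" where
  "I_P_gens = {delta (v, m) - delta (w, n) | v m w n.
                 (v, m) \<in> Wbasis \<and> (w, n) \<in> Wbasis \<and> fl v = fl w}"

lemma I_P_eq_span: "I_P = span_fun I_P_gens"
  by (simp add: I_P_def I_P_gens_def)

lemma delta_diff_in_I_P:
  "(v, m) \<in> Wbasis \<Longrightarrow> (w, n) \<in> Wbasis \<Longrightarrow> fl v = fl w \<Longrightarrow> delta (v, m) - delta (w, n) \<in> I_P"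
  unfolding I_P_eq_span I_P_gens_def by (rule span_fun_base) blast

lemmas I_P_zero = span_fun_zero[where G = I_P_gens, folded I_P_eq_span]
lemmas I_P_add = span_fun_add[where G = I_P_gens, folded I_P_eq_span]
lemmas I_P_smul = span_fun_smul[where G = I_P_gens, folded I_P_eq_span]
lemmas I_P_diff = span_fun_diff[where G = I_P_gens, folded I_P_eq_span]
lemmas I_P_sum = span_fun_sum[where G = I_P_gens, folded I_P_eq_span]
lemmas I_P_sum_mset = span_fun_sum_mset[where G = I_P_gens, folded I_P_eq_span]

lemma I_P_uminus: "x \<in> I_P \<Longrightarrow> - x \<in> I_P"
  using I_P_smul[of x "- 1"] by (simp add: smul_minus_one)

lemma I_P_subset_Wsp: "(I_P :: (key \<Rightarrow> 'k::field) set) \<subseteq> Wsp"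
proof
  fix x :: "key \<Rightarrow> 'k" assume "x \<in> I_P"
  then show "x \<in> Wsp"
    unfolding I_P_eq_span
  proof (induction rule: span_fun_induct)
    case zero
    show ?case by (rule Wsp_zero)
  next
    case (step c g y)
    then have "g \<in> Wsp"
      unfolding I_P_gens_def by (auto intro: Wsp_diff Wsp_delta)
    then show ?case
      using step.IH by (intro Wsp_add Wsp_smul)
  qed
qed

lemma fin_linear_image_I_P:
  assumes "fin_linear f"
    and "\<And>v m w n. (v, m) \<in> Wbasis \<Longrightarrow> (w, n) \<in> Wbasis \<Longrightarrow> fl v = fl w \<Longrightarrow>
           f (delta (v, m)) - f (delta (w, n)) \<in> span_fun H"
    and "x \<in> I_P"
  shows "f x \<in> span_fun H"
  using assms(3) unfolding I_P_eq_span
proof (induction rule: span_fun_induct)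
  case zero
  then show ?case
    by (metis fin_linear_zero[OF assms(1)] span_fun_zero)
next
  case (step c g y)
  then obtain v m w n where g: "g = delta (v, m) - delta (w, n)"
    and vw: "(v, m) \<in> Wbasis" "(w, n) \<in> Wbasis" "fl v = fl w"
    unfolding I_P_gens_def by blast
  have "finite (supp y)"
    using step.hyps(2) I_P_subset_Wsp finite_supp_Wsp unfolding I_P_eq_span by blast
  then have "f (smul c g + y) = f (smul c g) + f y"
    unfolding g by (intro fin_linear_add[OF assms(1)] finite_supp_smul finite_supp_diff) simp_all
  also have "f (smul c g) = smul c (f g)"
    unfolding g by (intro fin_linear_smul[OF assms(1)] finite_supp_diff) simp_all
  also have "f g = f (delta (v, m)) - f (delta (w, n))"
    unfolding g by (intro fin_linear_diff[OF assms(1)]) simp_all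
  finally show ?case
    using assms(2)[OF vw] step.IH by (simp only:) (intro span_fun_add span_fun_smul)
qed

lemma fin_linear_maps_I_P:
  assumes "fin_linear f"
    and "\<And>v m w n. (v, m) \<in> Wbasis \<Longrightarrow> (w, n) \<in> Wbasis \<Longrightarrow> fl v = fl w \<Longrightarrow>
           f (delta (v, m)) - f (delta (w, n)) \<in> I_P"
    and "x \<in> I_P"
  shows "f x \<in> I_P"
  using fin_linear_image_I_P[of f I_P_gens x] assms unfolding I_P_eq_span by blast

section \<open>Standardization and order-compatible pairs of words\<close>

definition order_compatible :: "(nat \<times> nat) set \<Rightarrow> bool" where
  "order_compatible R \<longleftrightarrow> (\<forall>p\<in>R. \<forall>q\<in>R. fst p \<le> fst q \<longleftrightarrow> snd p \<le> snd q)"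

lemma order_compatible_subset: "order_compatible R \<Longrightarrow> S \<subseteq> R \<Longrightarrow> order_compatible S"
  unfolding order_compatible_def by blast

lemma order_compatible_Un:
  assumes "order_compatible R" "order_compatible S"
    and below: "\<And>p q. p \<in> R \<Longrightarrow> q \<in> S \<Longrightarrow> fst p < fst q \<and> snd p < snd q"
  shows "order_compatible (R \<union> S)"
  unfolding order_compatible_def
proof (intro ballI)
  fix p q assume "p \<in> R \<union> S" "q \<in> R \<union> S"
  then consider "p \<in> R" "q \<in> R" | "p \<in> S" "q \<in> S" | "p \<in> R" "q \<in> S" | "p \<in> S" "q \<in> R"
    by blast
  then show "fst p \<le> fst q \<longleftrightarrow> snd p \<le> snd q"
  proof cases
    case 3
    then show ?thesis using below[of p q] by simp
  next
    case 4
    then show ?thesis using below[of q p] by simp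
  qed (use assms(1,2) in \<open>simp_all add: order_compatible_def\<close>)
qed

lemma order_compatible_shift:
  assumes "order_compatible R"
  shows "order_compatible ((\<lambda>(a, b). (a + m, b + n)) ` R)"
  unfolding order_compatible_def
proof (intro ballI)
  fix p q assume "p \<in> (\<lambda>(a, b). (a + m, b + n)) ` R" "q \<in> (\<lambda>(a, b). (a + m, b + n)) ` R"
  then obtain p' q' where "p' \<in> R" "q' \<in> R"
    and "p = (fst p' + m, snd p' + n)" "q = (fst q' + m, snd q' + n)"
    by auto
  then show "fst p \<le> fst q \<longleftrightarrow> snd p \<le> snd q"
    using assms unfolding order_compatible_def by simp
qed

lemma order_compatible_diag: "order_compatible ((\<lambda>c. (c, c)) ` A)"
  unfolding order_compatible_def by auto

lemma order_compatible_inj_on: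
  assumes "order_compatible R"
  shows "inj_on fst R" "inj_on snd R"
  using assms unfolding order_compatible_def inj_on_def by (metis antisym order_refl prod_eqI)+

lemma order_compatible_card_le:
  assumes "order_compatible R" "(a, b) \<in> R"
  shows "card {x \<in> fst ` R. x \<le> a} = card {y \<in> snd ` R. y \<le> b}"
proof -
  have "{p \<in> R. fst p \<le> a} = {p \<in> R. snd p \<le> b}"
    using assms unfolding order_compatible_def by fastforce
  moreover have "{x \<in> fst ` R. x \<le> a} = fst ` {p \<in> R. fst p \<le> a}"
    and "{y \<in> snd ` R. y \<le> b} = snd ` {p \<in> R. snd p \<le> b}"
    by auto
  ultimately show ?thesis
    using order_compatible_inj_on[OF assms(1)]
    by (simp add: card_image inj_on_subset[of _ R])
qed

lemma length_fl [simp]: "length (fl v) = length v"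
  by (simp add: fl_def)

lemma nth_fl: "i < length v \<Longrightarrow> fl v ! i = card {b \<in> set v. b \<le> v ! i}"
  by (simp add: fl_def)

lemma fl_eq_imp_length_eq: "fl v = fl w \<Longrightarrow> length v = length w"
  by (metis length_fl)

lemma le_iff_card_le:
  fixes a b :: nat
  assumes "finite S" "a \<in> S" "b \<in> S"
  shows "a \<le> b \<longleftrightarrow> card {x \<in> S. x \<le> a} \<le> card {x \<in> S. x \<le> b}"
proof
  assume "a \<le> b"
  then show "card {x \<in> S. x \<le> a} \<le> card {x \<in> S. x \<le> b}"
    by (intro card_mono) (use assms in auto)
next
  assume "card {x \<in> S. x \<le> a} \<le> card {x \<in> S. x \<le> b}"
  moreover have "card {x \<in> S. x \<le> b} < card {x \<in> S. x \<le> a}" if "\<not> a \<le> b"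
    using that assms by (intro psubset_card_mono) auto
  ultimately show "a \<le> b"
    by linarith
qed

lemma fl_eq_imp_order_compatible:
  assumes "fl v = fl w"
  shows "order_compatible (set (zip v w))"
  unfolding order_compatible_def
proof (intro ballI)
  fix p q assume "p \<in> set (zip v w)" "q \<in> set (zip v w)"
  then obtain i j where ij: "i < length v" "j < length v" "p = (v ! i, w ! i)" "q = (v ! j, w ! j)"
    using fl_eq_imp_length_eq[OF assms] by (auto simp: set_zip)
  have "v ! i \<le> v ! j \<longleftrightarrow> fl v ! i \<le> fl v ! j"
    using ij by (simp add: nth_fl le_iff_card_le)
  moreover have "w ! i \<le> w ! j \<longleftrightarrow> fl w ! i \<le> fl w ! j"
    using ij fl_eq_imp_length_eq[OF assms] by (simp add: nth_fl le_iff_card_le)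
  ultimately show "fst p \<le> fst q \<longleftrightarrow> snd p \<le> snd q"
    using assms ij by simp
qed

lemma order_compatible_imp_fl_eq:
  assumes "length v = length w" "order_compatible (set (zip v w))"
  shows "fl v = fl w"
proof (rule nth_equalityI)
  fix i assume "i < length (fl v)"
  then have i: "(v ! i, w ! i) \<in> set (zip v w)" "i < length w"
    using assms(1) by (auto simp: set_zip)
  have "fst ` set (zip v w) = set v" "snd ` set (zip v w) = set w"
    using assms(1) by (metis map_fst_zip map_snd_zip set_map)+
  then show "fl v ! i = fl w ! i"
    using order_compatible_card_le[OF assms(2) i(1)] i(2) assms(1) by (simp add: nth_fl)
qed (simp add: assms(1))

lemma fl_take:
  assumes "fl v = fl w"
  shows "fl (take i v) = fl (take i w)"
proof (rule order_compatible_imp_fl_eq)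
  show "length (take i v) = length (take i w)"
    using fl_eq_imp_length_eq[OF assms] by simp
  have "set (zip (take i v) (take i w)) \<subseteq> set (zip v w)"
    by (metis set_take_subset take_zip)
  then show "order_compatible (set (zip (take i v) (take i w)))"
    by (rule order_compatible_subset[OF fl_eq_imp_order_compatible[OF assms]])
qed

lemma fl_drop:
  assumes "fl v = fl w"
  shows "fl (drop i v) = fl (drop i w)"
proof (rule order_compatible_imp_fl_eq)
  show "length (drop i v) = length (drop i w)"
    using fl_eq_imp_length_eq[OF assms] by simp
  have "set (zip (drop i v) (drop i w)) \<subseteq> set (zip v w)"
    by (metis set_drop_subset drop_zip)
  then show "order_compatible (set (zip (drop i v) (drop i w)))"
    by (rule order_compatible_subset[OF fl_eq_imp_order_compatible[OF assms]])
qed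

section \<open>Shuffles\<close>

lemma shuf_Nil_right [simp]: "shuf v [] = {#v#}"
  by (cases v) auto

lemma shuf_map: "shuf (map f a) (map f b) = image_mset (map f) (shuf a b)"
  by (induction a b rule: shuf.induct) (auto simp: multiset.map_comp o_def)

lemma set_shuf: "t \<in># shuf a b \<Longrightarrow> set t = set a \<union> set b"
  by (induction a b arbitrary: t rule: shuf.induct) auto

lemma length_shuf: "t \<in># shuf a b \<Longrightarrow> length t = length a + length b"
  by (induction a b arbitrary: t rule: shuf.induct) auto

lemma shift_shift: "shift m (shift n w) = shift (m + n) w"
  by (simp add: shift_def ac_simps)

lemma shuf_shift: "shuf (shift m a) (shift m b) = image_mset (shift m) (shuf a b)"
  unfolding shift_def by (rule shuf_map)

lemma image_mset_sum_mset: "image_mset f (\<Sum>s\<in>#M. g s) = (\<Sum>s\<in>#M. image_mset f (g s))"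
  by (induction M) auto

lemma sum_shuf_Cons_Cons:
  "(\<Sum>s\<in>#shuf (x # a) (y # b). F s) = (\<Sum>s\<in>#shuf a (y # b). F (x # s)) + (\<Sum>s\<in>#shuf (x # a) b. F (y # s))"
  by (simp add: multiset.map_comp comp_def)

lemma shuf_assoc: "(\<Sum>s\<in>#shuf a b. shuf s c) = (\<Sum>s\<in>#shuf b c. shuf a s)"
proof (induction "length a + length b + length c" arbitrary: a b c rule: less_induct)
  case less
  show ?case
  proof (cases "a = [] \<or> b = [] \<or> c = []")
    case True
    have shuf_Nil: "shuf [] = (\<lambda>s. {#s#})"
      by (rule ext) simp
    show ?thesis
      using True by (auto simp: shuf_Nil)
  next
    case False
    then obtain x a' y b' z c' where abc: "a = x # a'" "b = y # b'" "c = z # c'"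
      by (metis list.exhaust)
    let ?X = "image_mset ((#) x)" and ?Y = "image_mset ((#) y)" and ?Z = "image_mset ((#) z)"
    have "(\<Sum>s\<in>#shuf a b. shuf s c) =
        ?X (\<Sum>s\<in>#shuf a' b. shuf s c) + ?Y (\<Sum>s\<in>#shuf a b'. shuf s c) + ?Z (\<Sum>s\<in>#shuf a b. shuf s c')"
      unfolding abc sum_shuf_Cons_Cons[where F = "\<lambda>s. shuf s _"]
      by (simp add: sum_mset.distrib image_mset_sum_mset ac_simps)
    moreover have "(\<Sum>s\<in>#shuf b c. shuf a s) =
        ?X (\<Sum>s\<in>#shuf b c. shuf a' s) + ?Y (\<Sum>s\<in>#shuf b' c. shuf a s) + ?Z (\<Sum>s\<in>#shuf b c'. shuf a s)"
      unfolding abc sum_shuf_Cons_Cons[where F = "shuf _"]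
      by (simp add: sum_mset.distrib image_mset_sum_mset ac_simps)
    moreover have "(\<Sum>s\<in>#shuf a' b. shuf s c) = (\<Sum>s\<in>#shuf b c. shuf a' s)"
      and "(\<Sum>s\<in>#shuf a b'. shuf s c) = (\<Sum>s\<in>#shuf b' c. shuf a s)"
      and "(\<Sum>s\<in>#shuf a b. shuf s c') = (\<Sum>s\<in>#shuf b c'. shuf a s)"
      by (rule less; simp add: abc)+
    ultimately show ?thesis
      by simp
  qed
qed

definition shmul :: "(key \<Rightarrow> 'k::field) \<Rightarrow> (key \<Rightarrow> 'k) \<Rightarrow> key \<Rightarrow> 'k" where
  "shmul x y = nabla (tens x y)"

lemma sum_mset_delta_apply:
  "(\<Sum>s\<in>#M. delta (s, K)) (u, k) = (if k = K then of_nat (count M u) else (0 :: 'k::comm_ring_1))"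
  by (induction M) (auto simp: delta_def)

lemma mu_b_eq: "mu_b ((v, m), (w, n)) = (\<Sum>s\<in>#shuf v (shift m w). delta (s, m + n))"
  by (auto simp: mu_b_def fun_eq_iff sum_mset_delta_apply)

lemma shmul_delta: "shmul (delta a) (delta b) = mu_b (a, b)"
  by (simp add: shmul_def nabla_def tens_delta)

lemma finite_supp_mu_b: "finite (supp (mu_b p :: key \<Rightarrow> 'k::field))"
proof -
  obtain v m w n where "p = ((v, m), (w, n))"
    by (metis prod.collapse)
  then show ?thesis
    by (simp add: mu_b_eq finite_supp_sum_mset)
qed

lemma supp_mu_b:
  assumes "c \<in> supp (mu_b ((v, m), (w, n)) :: key \<Rightarrow> 'k::field)"
  obtains s where "c = (s, m + n)" "s \<in># shuf v (shift m w)"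
proof -
  obtain s k where c: "c = (s, k)" by (cases c)
  then have "k = m + n" "of_nat (count (shuf v (shift m w)) s) \<noteq> (0 :: 'k)"
    using assms by (auto simp: mu_b_def split: if_splits)
  then show ?thesis
    using that c by (metis count_eq_zero_iff of_nat_0)
qed

lemma finite_supp_shmul: "finite (supp x) \<Longrightarrow> finite (supp y) \<Longrightarrow> finite (supp (shmul x y))"
  unfolding shmul_def nabla_def by (intro finite_supp_lin finite_supp_tens finite_supp_mu_b)

lemma fin_linear_shmul_left: "finite (supp y) \<Longrightarrow> fin_linear (\<lambda>x. shmul x y)"
  unfolding shmul_def nabla_def
  by (rule fin_linearI)
     (simp_all add: tens_add_left tens_smul_left lin_add finite_supp_tens
       fin_linear_smul[OF fin_linear_lin])

lemma fin_linear_shmul_right: "finite (supp x) \<Longrightarrow> fin_linear (shmul x)"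
  unfolding shmul_def nabla_def
  by (rule fin_linearI)
     (simp_all add: tens_add_right tens_smul_right lin_add finite_supp_tens
       fin_linear_smul[OF fin_linear_lin])

lemma shmul_zero_left [simp]: "shmul 0 y = 0"
  by (simp add: shmul_def nabla_def tens_def lin_def fun_eq_iff)

lemma shmul_zero_right [simp]: "shmul x 0 = 0"
  by (simp add: shmul_def nabla_def tens_def lin_def fun_eq_iff)

lemmas shmul_diff_left = fin_linear_diff[OF fin_linear_shmul_left]
lemmas shmul_diff_right = fin_linear_diff[OF fin_linear_shmul_right]
lemmas shmul_sum_left = fin_linear_sum[OF fin_linear_shmul_left]
lemmas shmul_sum_right = fin_linear_sum[OF fin_linear_shmul_right]
lemmas shmul_sum_mset_left = fin_linear_sum_mset[OF fin_linear_shmul_left]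
lemmas shmul_sum_mset_right = fin_linear_sum_mset[OF fin_linear_shmul_right]

lemma supp_shmul:
  fixes x y :: "key \<Rightarrow> 'k::field"
  assumes "finite (supp x)" "finite (supp y)"
  shows "supp (shmul x y) \<subseteq> (\<Union>p\<in>supp x \<times> supp y. supp (mu_b p :: key \<Rightarrow> 'k))"
proof -
  have "supp (shmul x y) \<subseteq> (\<Union>p\<in>supp (tens x y). supp (smul (tens x y p) (mu_b p)))"
    unfolding shmul_def nabla_def lin_eq_sum[OF finite_supp_tens[OF assms] order_refl]
    by (rule supp_sum)
  also have "\<dots> \<subseteq> (\<Union>p\<in>supp x \<times> supp y. supp (mu_b p :: key \<Rightarrow> 'k))"
    by (intro UN_mono supp_tens) (rule supp_smul)
  finally show ?thesis .
qed

definition homogeneous_of_deg :: "nat \<Rightarrow> (key \<Rightarrow> 'k::field) \<Rightarrow> bool" where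
  "homogeneous_of_deg d x \<longleftrightarrow> x \<in> Wsp \<and> (\<forall>c\<in>supp x. deg c = d)"

lemma homogeneous_of_deg_delta: "(w, n) \<in> Wbasis \<Longrightarrow> homogeneous_of_deg (length w) (delta (w, n))"
  by (simp add: homogeneous_of_deg_def Wsp_delta deg_def)

lemma homogeneous_of_deg_uminus: "homogeneous_of_deg d x \<Longrightarrow> homogeneous_of_deg d (- x)"
  by (simp add: homogeneous_of_deg_def Wsp_uminus)

lemma homogeneous_of_deg_sum:
  "(\<And>a. a \<in> A \<Longrightarrow> homogeneous_of_deg d (f a)) \<Longrightarrow> homogeneous_of_deg d (sum f A)"
  unfolding homogeneous_of_deg_def using supp_sum[of f A] by (blast intro: Wsp_sum)

lemma supp_mu_b_Wbasis:
  assumes "(v, m) \<in> Wbasis" "(w, n) \<in> Wbasis" "c \<in> supp (mu_b ((v, m), (w, n)) :: key \<Rightarrow> 'k::field)"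
  shows "c \<in> Wbasis" "deg c = length v + length w"
proof -
  obtain s where s: "c = (s, m + n)" "s \<in># shuf v (shift m w)"
    using supp_mu_b[OF assms(3)] .
  then show "c \<in> Wbasis"
    using assms(1,2) set_shuf[OF s(2)] by (auto simp: Wbasis_iff shift_def)
  show "deg c = length v + length w"
    using s length_shuf[OF s(2)] by (simp add: deg_def shift_def)
qed

lemma supp_shmul_Wsp:
  fixes x y :: "key \<Rightarrow> 'k::field"
  assumes "x \<in> Wsp" "y \<in> Wsp" "c \<in> supp (shmul x y)"
  obtains a b where "a \<in> supp x" "b \<in> supp y" "c \<in> Wbasis" "deg c = deg a + deg b"
proof -
  have "c \<in> (\<Union>p\<in>supp x \<times> supp y. supp (mu_b p :: key \<Rightarrow> 'k))"
    using supp_shmul[OF finite_supp_Wsp[OF assms(1)] finite_supp_Wsp[OF assms(2)]] assms(3)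
    by (rule subsetD)
  then obtain p where "p \<in> supp x \<times> supp y" "c \<in> supp (mu_b p :: key \<Rightarrow> 'k)"
    by (rule UN_E)
  then obtain a b where ab: "a \<in> supp x" "b \<in> supp y" "c \<in> supp (mu_b (a, b) :: key \<Rightarrow> 'k)"
    by (cases p) auto
  obtain v m w n where a: "a = (v, m)" and b: "b = (w, n)"
    by (cases a, cases b)
  have "(v, m) \<in> Wbasis" "(w, n) \<in> Wbasis"
    using ab assms(1,2) Wsp_supp_Wbasis unfolding a b by blast+
  then have "c \<in> Wbasis" "deg c = deg a + deg b"
    using supp_mu_b_Wbasis[of v m w n c] ab(3) unfolding a b by (simp_all add: deg_def)
  then show ?thesis
    using that ab(1,2) by blast
qed

lemma shmul_Wsp:
  assumes "x \<in> Wsp" "y \<in> Wsp"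
  shows "shmul x y \<in> Wsp"
proof -
  have "supp (shmul x y) \<subseteq> Wbasis"
    using supp_shmul_Wsp[OF assms] by blast
  then show ?thesis
    using assms by (simp add: Wsp_def finite_supp_shmul)
qed

lemma homogeneous_of_deg_shmul:
  assumes "homogeneous_of_deg d x" "homogeneous_of_deg e y"
  shows "homogeneous_of_deg (d + e) (shmul x y)"
proof -
  have "x \<in> Wsp" "y \<in> Wsp"
    using assms by (simp_all add: homogeneous_of_deg_def)
  moreover have "deg c = d + e" if "c \<in> supp (shmul x y)" for c
    using supp_shmul_Wsp[OF \<open>x \<in> Wsp\<close> \<open>y \<in> Wsp\<close> that] assms
    unfolding homogeneous_of_deg_def by metis
  ultimately show ?thesis
    by (simp add: homogeneous_of_deg_def shmul_Wsp)
qed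

lemma sum_mset_subtractf:
  "(\<Sum>t\<in>#M. f t - g t) = (\<Sum>t\<in>#M. f t) - (\<Sum>t\<in>#M. g t :: 'a::ab_group_add)"
  by (induction M) (auto simp: algebra_simps)

lemma set_zip_shift:
  "set (zip (shift m v) (shift n w)) = (\<lambda>(a, b). (a + m, b + n)) ` set (zip v w)"
  by (simp add: shift_def zip_map_map)

lemma sum_shuf_diff_in_I_P:
  assumes len: "length v = length w" "length u = length u'"
    and compat: "order_compatible (set (zip (v @ u) (w @ u')))"
    and basis: "(v @ u, K) \<in> Wbasis" "(w @ u', K') \<in> Wbasis"
  shows "(\<Sum>s\<in>#shuf v u. delta (s, K)) - (\<Sum>s\<in>#shuf w u'. delta (s, K'))
           \<in> (I_P :: (key \<Rightarrow> 'k::field) set)"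
proof -
  let ?T = "shuf (zip v w) (zip u u')"
  have "shuf v u = image_mset (map fst) ?T" "shuf w u' = image_mset (map snd) ?T"
    using shuf_map[of fst "zip v w" "zip u u'"] shuf_map[of snd "zip v w" "zip u u'"] len by simp_all
  then have "(\<Sum>s\<in>#shuf v u. delta (s, K)) - (\<Sum>s\<in>#shuf w u'. delta (s, K'))
      = (\<Sum>t\<in>#?T. delta (map fst t, K) - delta (map snd t, K') :: key \<Rightarrow> 'k)"
    by (simp add: sum_mset_subtractf multiset.map_comp comp_def)
  also have "\<dots> \<in> I_P"
  proof (rule I_P_sum_mset)
    fix t assume "t \<in># ?T"
    then have t: "set t = set (zip (v @ u) (w @ u'))"
      using set_shuf len by (simp add: zip_append)
    have "fl (map fst t) = fl (map snd t)"
      using compat t by (intro order_compatible_imp_fl_eq) (simp_all add: zip_map_fst_snd)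
    moreover have "set (map fst t) \<subseteq> set (v @ u)" "set (map snd t) \<subseteq> set (w @ u')"
      using t by (auto dest: set_zip_leftD set_zip_rightD)
    ultimately show "delta (map fst t, K) - delta (map snd t, K') \<in> I_P"
      using basis by (intro delta_diff_in_I_P) (auto simp: Wbasis_iff)
  qed
  finally show ?thesis .
qed

lemma mu_b_diff_left_in_I_P:
  assumes "(v, m) \<in> Wbasis" "(w, n) \<in> Wbasis" "fl v = fl w" "(u, k) \<in> Wbasis"
  shows "mu_b ((v, m), (u, k)) - mu_b ((w, n), (u, k)) \<in> (I_P :: (key \<Rightarrow> 'k::field) set)"
proof -
  have len: "length v = length w"
    using assms(3) by (rule fl_eq_imp_length_eq)
  have "set (zip (v @ shift m u) (w @ shift n u))
      = set (zip v w) \<union> (\<lambda>(a, b). (a + m, b + n)) ` ((\<lambda>c. (c, c)) ` set u)"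
    using len by (simp add: zip_append set_zip_shift zip_same_conv_map)
  moreover have "order_compatible (set (zip v w) \<union> (\<lambda>(a, b). (a + m, b + n)) ` ((\<lambda>c. (c, c)) ` set u))"
  proof (rule order_compatible_Un)
    show "order_compatible (set (zip v w))"
      using assms(3) by (rule fl_eq_imp_order_compatible)
    show "order_compatible ((\<lambda>(a, b). (a + m, b + n)) ` ((\<lambda>c. (c, c)) ` set u))"
      by (intro order_compatible_shift order_compatible_diag)
    fix p q assume p: "p \<in> set (zip v w)" and "q \<in> (\<lambda>(a, b). (a + m, b + n)) ` ((\<lambda>c. (c, c)) ` set u)"
    then obtain c where c: "c \<in> set u" "q = (c + m, c + n)"
      by auto
    have "fst p \<in> set v" "snd p \<in> set w"
      using p by (metis prod.collapse set_zip_leftD set_zip_rightD)+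
    then have "fst p \<le> m" "snd p \<le> n"
      using assms(1,2) by (auto simp: Wbasis_iff)
    moreover have "0 < c"
      using c(1) assms(4) by (auto simp: Wbasis_iff)
    ultimately show "fst p < fst q \<and> snd p < snd q"
      using c(2) by simp
  qed
  ultimately show ?thesis
    unfolding mu_b_eq
    using assms(1,2,4) len by (intro sum_shuf_diff_in_I_P) (auto simp: shift_def Wbasis_iff)
qed

lemma mu_b_diff_right_in_I_P:
  assumes "(v, m) \<in> Wbasis" "(w, n) \<in> Wbasis" "fl v = fl w" "(u, k) \<in> Wbasis"
  shows "mu_b ((u, k), (v, m)) - mu_b ((u, k), (w, n)) \<in> (I_P :: (key \<Rightarrow> 'k::field) set)"
proof -
  have len: "length v = length w"
    using assms(3) by (rule fl_eq_imp_length_eq)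
  have "set (zip (u @ shift k v) (u @ shift k w))
      = (\<lambda>c. (c, c)) ` set u \<union> (\<lambda>(a, b). (a + k, b + k)) ` set (zip v w)"
    by (simp add: zip_append set_zip_shift zip_same_conv_map)
  moreover have "order_compatible ((\<lambda>c. (c, c)) ` set u \<union> (\<lambda>(a, b). (a + k, b + k)) ` set (zip v w))"
  proof (rule order_compatible_Un)
    show "order_compatible ((\<lambda>c. (c, c)) ` set u)"
      by (rule order_compatible_diag)
    show "order_compatible ((\<lambda>(a, b). (a + k, b + k)) ` set (zip v w))"
      using assms(3) by (intro order_compatible_shift fl_eq_imp_order_compatible)
    fix p q assume "p \<in> (\<lambda>c. (c, c)) ` set u" and q: "q \<in> (\<lambda>(a, b). (a + k, b + k)) ` set (zip v w)"
    then obtain c r where c: "c \<in> set u" "p = (c, c)" and r: "r \<in> set (zip v w)" "q = (fst r + k, snd r + k)"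
      by auto
    have "fst r \<in> set v" "snd r \<in> set w"
      using r(1) by (metis prod.collapse set_zip_leftD set_zip_rightD)+
    then have "0 < fst r" "0 < snd r"
      using assms(1,2) by (auto simp: Wbasis_iff)
    moreover have "c \<le> k"
      using c(1) assms(4) by (auto simp: Wbasis_iff)
    ultimately show "fst p < fst q \<and> snd p < snd q"
      using c(2) r(2) by simp
  qed
  ultimately show ?thesis
    unfolding mu_b_eq
    using assms(1,2,4) len by (intro sum_shuf_diff_in_I_P) (auto simp: shift_def Wbasis_iff)
qed

lemma shmul_I_P_left:
  assumes "x \<in> I_P" "y \<in> Wsp"
  shows "shmul x y \<in> (I_P :: (key \<Rightarrow> 'k::field) set)"
proof -
  have delta_case: "shmul x (delta (u, k)) \<in> I_P" if "(u, k) \<in> Wbasis" for u k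
  proof (rule fin_linear_maps_I_P[OF fin_linear_shmul_left _ assms(1)])
    fix v m w n assume "(v, m) \<in> Wbasis" "(w, n) \<in> Wbasis" "fl v = fl w"
    then show "shmul (delta (v, m)) (delta (u, k)) - shmul (delta (w, n)) (delta (u, k)) \<in> I_P"
      using that by (simp add: shmul_delta mu_b_diff_left_in_I_P)
  qed simp
  have "shmul x y = (\<Sum>b\<in>supp y. smul (y b) (shmul x (delta b)))"
    using assms I_P_subset_Wsp
    by (intro fin_linear_expansion fin_linear_shmul_right finite_supp_Wsp) auto
  also have "\<dots> \<in> I_P"
    using delta_case Wsp_supp_Wbasis[OF assms(2)] by (intro I_P_sum I_P_smul) auto
  finally show ?thesis .
qed

lemma shmul_I_P_right:
  assumes "x \<in> I_P" "y \<in> Wsp"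
  shows "shmul y x \<in> (I_P :: (key \<Rightarrow> 'k::field) set)"
proof -
  have delta_case: "shmul (delta (u, k)) x \<in> I_P" if "(u, k) \<in> Wbasis" for u k
  proof (rule fin_linear_maps_I_P[OF fin_linear_shmul_right _ assms(1)])
    fix v m w n assume "(v, m) \<in> Wbasis" "(w, n) \<in> Wbasis" "fl v = fl w"
    then show "shmul (delta (u, k)) (delta (v, m)) - shmul (delta (u, k)) (delta (w, n)) \<in> I_P"
      using that by (simp add: shmul_delta mu_b_diff_right_in_I_P)
  qed simp
  have "shmul y x = (\<Sum>b\<in>supp y. smul (y b) (shmul (delta b) x))"
    using assms I_P_subset_Wsp
    by (intro fin_linear_expansion[where f = "\<lambda>y. shmul y x"] fin_linear_shmul_left finite_supp_Wsp) auto
  also have "\<dots> \<in> I_P"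
    using delta_case Wsp_supp_Wbasis[OF assms(2)] by (intro I_P_sum I_P_smul) auto
  finally show ?thesis .
qed

lemma shmul_congruent:
  assumes "x - x' \<in> I_P" "y - y' \<in> I_P" "x \<in> Wsp" "x' \<in> Wsp" "y \<in> Wsp" "y' \<in> Wsp"
  shows "shmul x y - shmul x' y' \<in> (I_P :: (key \<Rightarrow> 'k::field) set)"
proof -
  have "shmul x y - shmul x' y' = shmul (x - x') y + shmul x' (y - y')"
    using assms(3-6) by (simp add: shmul_diff_left shmul_diff_right finite_supp_Wsp)
  also have "\<dots> \<in> I_P"
    using assms by (intro I_P_add shmul_I_P_left shmul_I_P_right)
  finally show ?thesis .
qed

lemma sum_mset_bind: "(\<Sum>s\<in>#M. \<Sum>t\<in>#g s. f t) = (\<Sum>t\<in>#(\<Sum>s\<in>#M. g s). f t :: 'a::comm_monoid_add)"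
  by (induction M) auto

lemma shmul_assoc_delta:
  "shmul (shmul (delta a) (delta b)) (delta c) = shmul (delta a) (shmul (delta b) (delta c) :: key \<Rightarrow> 'k::field)"
proof -
  obtain u m v n w k where abc: "a = (u, m)" "b = (v, n)" "c = (w, k)"
    by (metis prod.exhaust)
  have "shmul (shmul (delta a) (delta b)) (delta c)
      = (\<Sum>s\<in>#shuf u (shift m v). \<Sum>t\<in>#shuf s (shift (m + n) w). delta (t, m + n + k) :: key \<Rightarrow> 'k)"
    unfolding abc shmul_delta mu_b_eq by (simp add: shmul_sum_mset_left shmul_delta mu_b_eq)
  also have "\<dots> = (\<Sum>t\<in>#(\<Sum>s\<in>#shuf (shift m v) (shift (m + n) w). shuf u s). delta (t, m + n + k))"
    by (simp add: sum_mset_bind shuf_assoc)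
  also have "\<dots> = (\<Sum>s\<in>#shuf v (shift n w). \<Sum>t\<in>#shuf u (shift m s). delta (t, m + (n + k)))"
    by (simp add: sum_mset_bind shift_shift[symmetric] shuf_shift multiset.map_comp comp_def ac_simps)
  also have "\<dots> = shmul (delta a) (shmul (delta b) (delta c))"
    unfolding abc shmul_delta mu_b_eq by (simp add: shmul_sum_mset_right shmul_delta mu_b_eq)
  finally show ?thesis .
qed

lemma fin_linear_shmul_comp:
  fixes x y :: "key \<Rightarrow> 'k::field"
  assumes "finite (supp x)" "finite (supp y)"
  shows "fin_linear (\<lambda>z. shmul x (shmul z y))" "fin_linear (\<lambda>z. shmul (shmul x z) y)"
    and "fin_linear (\<lambda>z. shmul x (shmul y z))" "fin_linear (\<lambda>z. shmul (shmul z x) y)"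
proof -
  note lin = fin_linear_shmul_left fin_linear_shmul_right finite_supp_shmul assms
  show "fin_linear (\<lambda>z. shmul x (shmul z y))"
    by (rule fin_linear_comp[where f = "shmul x" and g = "\<lambda>z. shmul z y"]) (simp_all add: lin)
  show "fin_linear (\<lambda>z. shmul (shmul x z) y)"
    by (rule fin_linear_comp[where f = "\<lambda>z. shmul z y" and g = "shmul x"]) (simp_all add: lin)
  show "fin_linear (\<lambda>z. shmul x (shmul y z))"
    by (rule fin_linear_comp[where f = "shmul x" and g = "shmul y"]) (simp_all add: lin)
  show "fin_linear (\<lambda>z. shmul (shmul z x) y)"
    by (rule fin_linear_comp[where f = "\<lambda>z. shmul z y" and g = "\<lambda>z. shmul z x"]) (simp_all add: lin)
qed

lemma shmul_assoc:
  fixes x y z :: "key \<Rightarrow> 'k::field"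
  assumes "finite (supp x)" "finite (supp y)" "finite (supp z)"
  shows "shmul (shmul x y) z = shmul x (shmul y z)"
proof -
  have deltas: "shmul (shmul (delta a) (delta b)) z = shmul (delta a) (shmul (delta b) z)" for a b
  proof (rule fin_linear_eq_on_delta[where f = "shmul (shmul (delta a) (delta b))"
        and g = "\<lambda>z. shmul (delta a) (shmul (delta b) z)"])
    show "fin_linear (shmul (shmul (delta a) (delta b)))"
      by (simp add: fin_linear_shmul_right finite_supp_shmul)
    show "fin_linear (\<lambda>z. shmul (delta a) (shmul (delta b) z))"
      by (rule fin_linear_shmul_comp) simp_all
  qed (simp_all add: assms shmul_assoc_delta)
  have delta_left: "shmul (shmul (delta a) y) z = shmul (delta a) (shmul y z)" for a
  proof (rule fin_linear_eq_on_delta[where f = "\<lambda>y. shmul (shmul (delta a) y) z"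
        and g = "\<lambda>y. shmul (delta a) (shmul y z)"])
    show "fin_linear (\<lambda>y. shmul (shmul (delta a) y) z)"
      by (rule fin_linear_shmul_comp) (simp_all add: assms)
    show "fin_linear (\<lambda>y. shmul (delta a) (shmul y z))"
      by (rule fin_linear_shmul_comp) (simp_all add: assms)
  qed (simp_all add: assms deltas)
  show ?thesis
  proof (rule fin_linear_eq_on_delta[where f = "\<lambda>x. shmul (shmul x y) z"
        and g = "\<lambda>x. shmul x (shmul y z)"])
    show "fin_linear (\<lambda>x. shmul (shmul x y) z)"
      by (rule fin_linear_shmul_comp) (simp_all add: assms)
    show "fin_linear (\<lambda>x. shmul x (shmul y z))"
      by (simp add: fin_linear_shmul_left finite_supp_shmul assms)
  qed (simp_all add: assms delta_left)
qed

lemma shmul_delta_Nil_right: "shmul (delta (u, k)) (delta ([], n)) = (delta (u, k + n) :: key \<Rightarrow> 'k::field)"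
  by (simp add: shmul_delta mu_b_eq shift_def)

lemma shmul_delta_Nil_left: "shmul (delta ([], 0)) (delta (w, n)) = (delta (w, n) :: key \<Rightarrow> 'k::field)"
  by (simp add: shmul_delta mu_b_eq shift_def)

lemma shmul_delta_Nil_right_congruent:
  assumes "x \<in> Wsp"
  shows "shmul x (delta ([], n)) - x \<in> (I_P :: (key \<Rightarrow> 'k::field) set)"
proof -
  have fin: "finite (supp x)"
    using assms by (rule finite_supp_Wsp)
  have "shmul x (delta ([], n)) - x
      = (\<Sum>a\<in>supp x. smul (x a) (shmul (delta a) (delta ([], n)))) - (\<Sum>a\<in>supp x. smul (x a) (delta a))"
    using fin_linear_expansion[OF fin_linear_shmul_left fin, of "delta ([], n)"] finsupp_expansion[OF fin]
    by simp
  also have "\<dots> = (\<Sum>a\<in>supp x. smul (x a) (shmul (delta a) (delta ([], n)) - delta a))"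
    by (simp add: sum_subtractf smul_diff)
  also have "\<dots> \<in> I_P"
  proof (intro I_P_sum I_P_smul)
    fix a assume "a \<in> supp x"
    moreover obtain u k where a: "a = (u, k)"
      by (cases a)
    ultimately have "(u, k) \<in> Wbasis"
      using assms Wsp_supp_Wbasis by blast
    then show "shmul (delta a) (delta ([], n)) - delta a \<in> (I_P :: (key \<Rightarrow> 'k) set)"
      unfolding a shmul_delta_Nil_right by (intro delta_diff_in_I_P) (auto simp: Wbasis_iff)
  qed
  finally show ?thesis .
qed

section \<open>Homogeneity, coideal and counit\<close>

lemma proj_deg_delta: "proj_deg d (delta b) = (if deg b = d then delta b else (0 :: key \<Rightarrow> 'k::field))"
  by (auto simp: proj_deg_def fun_eq_iff delta_def)

lemma proj_deg_I_P:
  assumes "x \<in> I_P"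
  shows "proj_deg d x \<in> (I_P :: (key \<Rightarrow> 'k::field) set)"
proof (rule fin_linear_maps_I_P[OF _ _ assms])
  show "fin_linear (proj_deg d :: (key \<Rightarrow> 'k) \<Rightarrow> _)"
    by (rule fin_linearI) (auto simp: proj_deg_def fun_eq_iff smul_def)
  fix v m w n assume "(v, m) \<in> Wbasis" "(w, n) \<in> Wbasis" "fl v = fl w"
  then show "proj_deg d (delta (v, m)) - proj_deg d (delta (w, n)) \<in> (I_P :: (key \<Rightarrow> 'k) set)"
    using fl_eq_imp_length_eq[of v w] by (simp add: proj_deg_delta deg_def delta_diff_in_I_P I_P_zero)
qed

lemma homogeneous_subspace_I_P: "homogeneous_subspace (I_P :: (key \<Rightarrow> 'k::field) set)"
  unfolding homogeneous_subspace_def using proj_deg_I_P by blast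

definition I_P_tensor_gens :: "(key \<times> key \<Rightarrow> 'k::field) set" where
  "I_P_tensor_gens = {tens a b | a b. a \<in> I_P \<and> b \<in> Wsp} \<union> {tens a b | a b. a \<in> Wsp \<and> b \<in> I_P}"

lemma delta_pair_diff_in_span:
  assumes "(v, m) \<in> Wbasis" "(w, n) \<in> Wbasis" "fl v = fl w"
    and "(v', m) \<in> Wbasis" "(w', n) \<in> Wbasis" "fl v' = fl w'"
  shows "delta ((v, m), (v', m)) - delta ((w, n), (w', n)) \<in> span_fun (I_P_tensor_gens :: (key \<times> key \<Rightarrow> 'k::field) set)"
proof -
  let ?a = "delta (v, m) :: key \<Rightarrow> 'k" and ?a' = "delta (w, n) :: key \<Rightarrow> 'k"
  let ?b = "delta (v', m) :: key \<Rightarrow> 'k" and ?b' = "delta (w', n) :: key \<Rightarrow> 'k"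
  have "delta ((v, m), (v', m)) - delta ((w, n), (w', n)) = tens (?a - ?a') ?b + tens ?a' (?b - ?b')"
    by (simp add: tens_diff_left tens_diff_right tens_delta)
  moreover have "tens (?a - ?a') ?b \<in> I_P_tensor_gens" "tens ?a' (?b - ?b') \<in> I_P_tensor_gens"
    unfolding I_P_tensor_gens_def using assms by (blast intro: delta_diff_in_I_P Wsp_delta)+
  ultimately show ?thesis
    by (simp add: span_fun_add span_fun_base)
qed

lemma Delta_I_P:
  assumes "x \<in> I_P"
  shows "Delta x \<in> span_fun (I_P_tensor_gens :: (key \<times> key \<Rightarrow> 'k::field) set)"
  unfolding Delta_def
proof (rule fin_linear_image_I_P[OF fin_linear_lin _ assms])
  fix v m w n assume vw: "(v, m) \<in> Wbasis" "(w, n) \<in> Wbasis" "fl v = fl w"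
  then have "length v = length w"
    by (intro fl_eq_imp_length_eq)
  then have "lin Delta_b (delta (v, m)) - lin Delta_b (delta (w, n))
      = (\<Sum>i\<le>length v. delta ((take i v, m), (drop i v, m)) - delta ((take i w, n), (drop i w, n)) :: key \<times> key \<Rightarrow> 'k)"
    by (simp add: Delta_b_def sum_subtractf)
  also have "\<dots> \<in> span_fun (I_P_tensor_gens :: (key \<times> key \<Rightarrow> 'k) set)"
    using vw by (intro span_fun_sum delta_pair_diff_in_span)
      (auto intro: Wbasis_take Wbasis_drop fl_take fl_drop)
  finally show "lin Delta_b (delta (v, m)) - lin Delta_b (delta (w, n))
      \<in> span_fun (I_P_tensor_gens :: (key \<times> key \<Rightarrow> 'k) set)" .
qed

definition unit_counit :: "key \<Rightarrow> key \<Rightarrow> 'k::field" where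
  "unit_counit b = (if fst b = [] then delta ([], 0) else 0)"

lemma iota_eps_eq_lin: "finite (supp x) \<Longrightarrow> iota (eps x) = lin unit_counit x"
  unfolding iota_def eps_def lin_eq_sum[OF _ order_refl] unit_counit_def sum_smul
  by (intro sum.cong) (auto simp: smul_def)

lemma eps_I_P:
  assumes "x \<in> I_P"
  shows "eps (x :: key \<Rightarrow> 'k::field) = 0"
proof -
  \<comment> \<open>The linear map \<open>x \<mapsto> \<iota> (\<epsilon> x)\<close> sends I_P into \<open>span_fun {} = {0}\<close>.\<close>
  have "lin unit_counit x \<in> span_fun ({} :: (key \<Rightarrow> 'k) set)"
  proof (rule fin_linear_image_I_P[OF fin_linear_lin _ assms])
    fix v m w n assume "(v, m) \<in> Wbasis" "(w, n) \<in> Wbasis" "fl v = fl w"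
    then have "v = [] \<longleftrightarrow> w = []"
      using fl_eq_imp_length_eq by fastforce
    then show "lin unit_counit (delta (v, m)) - lin unit_counit (delta (w, n)) \<in> span_fun ({} :: (key \<Rightarrow> 'k) set)"
      by (simp add: unit_counit_def span_fun_empty)
  qed
  moreover have "finite (supp x)"
    using assms I_P_subset_Wsp finite_supp_Wsp by blast
  ultimately have "iota (eps x) = (0 :: key \<Rightarrow> 'k)"
    by (simp add: span_fun_empty iota_eps_eq_lin)
  then have "iota (eps x) ([], 0) = (0 :: 'k)"
    by simp
  then show ?thesis
    by (simp add: iota_def smul_def delta_def)
qed

lemma bi_ideal_I_P: "bi_ideal (I_P :: (key \<Rightarrow> 'k::field) set)"
  unfolding bi_ideal_def
  using I_P_subset_Wsp shmul_I_P_left shmul_I_P_right Delta_I_P eps_I_P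
  unfolding shmul_def I_P_tensor_gens_def by blast

section \<open>The antipode\<close>

function antipode :: "key \<Rightarrow> key \<Rightarrow> 'k::field" where
  "antipode (w, n) = (if w = [] then delta ([], 0)
     else - (\<Sum>i<length w. shmul (antipode (take i w, n)) (delta (drop i w, n))))"
  by pat_completeness auto
termination
  by (relation "measure (\<lambda>b. length (fst b))") auto

declare antipode.simps [simp del]

lemma antipode_Nil: "antipode ([], n) = delta ([], 0)"
  by (simp add: antipode.simps)

lemma antipode_nonempty:
  "w \<noteq> [] \<Longrightarrow> antipode (w, n) = - (\<Sum>i<length w. shmul (antipode (take i w, n)) (delta (drop i w, n)))"
  by (simp add: antipode.simps)

lemma finite_supp_antipode: "finite (supp (antipode b :: key \<Rightarrow> 'k::field))"
proof (induction b rule: antipode.induct)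
  case (1 w n)
  show ?case
  proof (cases "w = []")
    case False
    have "finite (supp (\<Sum>i<length w. shmul (antipode (take i w, n)) (delta (drop i w, n)) :: key \<Rightarrow> 'k))"
      using 1 False by (intro finite_supp_sum finite_supp_shmul) auto
    then show ?thesis
      unfolding antipode_nonempty[OF False] supp_uminus .
  qed (simp add: antipode_Nil)
qed

lemma homogeneous_antipode:
  "(w, n) \<in> Wbasis \<Longrightarrow> homogeneous_of_deg (length w) (antipode (w, n) :: key \<Rightarrow> 'k::field)"
proof (induction "length w" arbitrary: w rule: less_induct)
  case less
  show ?case
  proof (cases "w = []")
    case True
    then show ?thesis
      using homogeneous_of_deg_delta[of "[]" 0] by (simp add: antipode_Nil Wbasis_iff)
  next
    case False
    have "homogeneous_of_deg (length w) (shmul (antipode (take i w, n)) (delta (drop i w, n)) :: key \<Rightarrow> 'k)"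
      if "i < length w" for i
    proof -
      have "homogeneous_of_deg (length (take i w)) (antipode (take i w, n) :: key \<Rightarrow> 'k)"
        using that less.prems by (intro less.hyps Wbasis_take) auto
      then have "homogeneous_of_deg i (antipode (take i w, n) :: key \<Rightarrow> 'k)"
        using that by simp
      moreover have "homogeneous_of_deg (length w - i) (delta (drop i w, n) :: key \<Rightarrow> 'k)"
        using homogeneous_of_deg_delta[OF Wbasis_drop[OF less.prems]] by simp
      ultimately show ?thesis
        using homogeneous_of_deg_shmul that by (metis le_add_diff_inverse less_imp_le_nat)
    qed
    then show ?thesis
      unfolding antipode_nonempty[OF False]
      by (intro homogeneous_of_deg_uminus homogeneous_of_deg_sum) simp
  qed
qed

lemma antipode_homogeneous:
  "b \<in> Wbasis \<Longrightarrow>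
   antipode b \<in> (Wsp :: (key \<Rightarrow> 'k::field) set) \<and> (\<forall>c\<in>supp (antipode b :: key \<Rightarrow> 'k). deg c = deg b)"
  using homogeneous_antipode[of "fst b" "snd b", where 'k = 'k] by (simp add: homogeneous_of_deg_def deg_def)

lemma antipode_Wsp: "b \<in> Wbasis \<Longrightarrow> antipode b \<in> (Wsp :: (key \<Rightarrow> 'k::field) set)"
  using antipode_homogeneous by blast

lemma antipode_diff_in_I_P:
  "(w, n) \<in> Wbasis \<Longrightarrow> (v, m) \<in> Wbasis \<Longrightarrow> fl w = fl v \<Longrightarrow>
   antipode (w, n) - antipode (v, m) \<in> (I_P :: (key \<Rightarrow> 'k::field) set)"
proof (induction "length w" arbitrary: w v rule: less_induct)
  case less
  have len: "length w = length v"
    using less.prems(3) by (rule fl_eq_imp_length_eq)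
  show ?case
  proof (cases "w = []")
    case True
    then show ?thesis
      using len by (simp add: antipode_Nil I_P_zero)
  next
    case False
    let ?A = "\<lambda>i. antipode (take i w, n) :: key \<Rightarrow> 'k" and ?A' = "\<lambda>i. antipode (take i v, m) :: key \<Rightarrow> 'k"
    let ?B = "\<lambda>i. delta (drop i w, n) :: key \<Rightarrow> 'k" and ?B' = "\<lambda>i. delta (drop i v, m) :: key \<Rightarrow> 'k"
    have terms: "shmul (?A i) (?B i) - shmul (?A' i) (?B' i) \<in> I_P" if "i < length w" for i
    proof (rule shmul_congruent)
      show "?A i - ?A' i \<in> I_P"
        using that less.prems by (intro less.hyps Wbasis_take fl_take) auto
      show "?B i - ?B' i \<in> I_P"
        using less.prems by (intro delta_diff_in_I_P Wbasis_drop fl_drop)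
    qed (use less.prems in \<open>simp_all add: antipode_Wsp Wsp_delta Wbasis_take Wbasis_drop\<close>)
    have "v \<noteq> []"
      using False len by auto
    then have "antipode (w, n) - antipode (v, m)
        = - (\<Sum>i<length w. shmul (?A i) (?B i) - shmul (?A' i) (?B' i))"
      using False len by (simp add: antipode_nonempty sum_subtractf)
    also have "\<dots> \<in> I_P"
      using terms by (intro I_P_uminus I_P_sum) simp
    finally show ?thesis .
  qed
qed

lemma lin_antipode_I_P: "x \<in> I_P \<Longrightarrow> lin antipode x \<in> (I_P :: (key \<Rightarrow> 'k::field) set)"
  by (rule fin_linear_maps_I_P[OF fin_linear_lin]) (simp_all add: antipode_diff_in_I_P)

section \<open>Convolution\<close>

definition convolution :: "(key \<Rightarrow> key \<Rightarrow> 'k::field) \<Rightarrow> (key \<Rightarrow> key \<Rightarrow> 'k) \<Rightarrow> key \<Rightarrow> key \<Rightarrow> 'k" where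
  "convolution F G b =
     (\<Sum>i\<le>length (fst b). shmul (F (take i (fst b), snd b)) (G (drop i (fst b), snd b)))"

lemma convolution_eq:
  "convolution F G (w, n) = (\<Sum>i\<le>length w. shmul (F (take i w, n)) (G (drop i w, n)))"
  by (simp add: convolution_def)

lemma convolution_split_last:
  "convolution F G (w, n)
     = (\<Sum>i<length w. shmul (F (take i w, n)) (G (drop i w, n))) + shmul (F (w, n)) (G ([], n))"
  by (simp add: convolution_eq lessThan_Suc_atMost[symmetric])

lemma finite_supp_convolution:
  "(\<And>b. finite (supp (F b))) \<Longrightarrow> (\<And>b. finite (supp (G b))) \<Longrightarrow> finite (supp (convolution F G b))"
  unfolding convolution_def by (intro finite_supp_sum finite_supp_shmul)

lemma finite_supp_unit_counit: "finite (supp (unit_counit b))"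
  by (simp add: unit_counit_def)

lemma convolution_diff_left:
  assumes "\<And>b. finite (supp (F b))" "\<And>b. finite (supp (F' b))" "\<And>b. finite (supp (G b))"
  shows "convolution F G b - convolution F' G b = convolution (\<lambda>c. F c - F' c) G b"
  by (simp add: convolution_def sum_subtractf shmul_diff_left assms)

lemma convolution_diff_right:
  assumes "\<And>b. finite (supp (F b))" "\<And>b. finite (supp (G b))" "\<And>b. finite (supp (G' b))"
  shows "convolution F G b - convolution F G' b = convolution F (\<lambda>c. G c - G' c) b"
  by (simp add: convolution_def sum_subtractf shmul_diff_right assms)

lemma convolution_delta_unit_counit: "convolution delta unit_counit (w, n) = (delta (w, n) :: key \<Rightarrow> 'k::field)"
  by (simp add: convolution_split_last unit_counit_def shmul_delta_Nil_right)

lemma convolution_unit_counit_delta: "convolution unit_counit delta (w, n) = (delta (w, n) :: key \<Rightarrow> 'k::field)"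
  by (simp add: convolution_eq sum.atMost_shift unit_counit_def shmul_delta_Nil_left)

lemma sum_atMost_triangle_swap:
  "(\<Sum>j\<le>(L::nat). \<Sum>i\<le>j. f i j) = (\<Sum>i\<le>L. \<Sum>j\<in>{i..L}. f i j :: 'a::comm_monoid_add)"
proof (induction L)
  case (Suc L)
  have "(\<Sum>i\<le>Suc L. \<Sum>j\<in>{i..Suc L}. f i j) = (\<Sum>i\<le>L. (\<Sum>j\<in>{i..L}. f i j) + f i (Suc L)) + f (Suc L) (Suc L)"
    by (simp add: atLeastAtMostSuc_conv add.commute)
  then show ?case
    using Suc by (simp add: sum.distrib ac_simps)
qed simp

lemma convolution_assoc:
  assumes "\<And>b. finite (supp (F b))" "\<And>b. finite (supp (G b))" "\<And>b. finite (supp (H b))"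
  shows "convolution (convolution F G) H (w, n) = convolution F (convolution G H) (w, n)"
proof -
  let ?L = "length w"
  let ?f = "\<lambda>i j. shmul (F (take i w, n)) (shmul (G (drop i (take j w), n)) (H (drop j w, n)))"
  have "convolution (convolution F G) H (w, n) = (\<Sum>j\<le>?L. \<Sum>i\<le>j. ?f i j)"
    unfolding convolution_eq[of "convolution F G"]
  proof (rule sum.cong[OF refl])
    fix j assume "j \<in> {..?L}"
    then have "convolution F G (take j w, n) = (\<Sum>i\<le>j. shmul (F (take i w, n)) (G (drop i (take j w), n)))"
      by (auto simp: convolution_eq min_def intro!: sum.cong)
    then show "shmul (convolution F G (take j w, n)) (H (drop j w, n)) = (\<Sum>i\<le>j. ?f i j)"
      by (simp add: shmul_sum_left shmul_assoc finite_supp_shmul assms)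
  qed
  also have "\<dots> = (\<Sum>i\<le>?L. \<Sum>j\<in>{i..?L}. ?f i j)"
    by (rule sum_atMost_triangle_swap)
  also have "\<dots> = convolution F (convolution G H) (w, n)"
    unfolding convolution_eq[of F "convolution G H"]
  proof (rule sum.cong[OF refl])
    fix i assume "i \<in> {..?L}"
    then have "convolution G H (drop i w, n)
        = (\<Sum>j\<in>{i..?L}. shmul (G (drop i (take j w), n)) (H (drop j w, n)))"
      unfolding convolution_eq
      by (intro sum.reindex_bij_witness[where i = "\<lambda>j. j - i" and j = "\<lambda>k. k + i"])
         (auto simp: take_drop)
    then show "(\<Sum>j\<in>{i..?L}. ?f i j) = shmul (F (take i w, n)) (convolution G H (drop i w, n))"
      by (simp add: shmul_sum_right finite_supp_shmul assms)
  qed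
  finally show ?thesis .
qed

lemma finite_supp_Delta_b: "finite (supp (Delta_b b :: key \<times> key \<Rightarrow> 'k::field))"
  unfolding Delta_b_def by (cases b) (simp add: finite_supp_sum)

lemma nabla_map_tens_Delta:
  fixes F G :: "key \<Rightarrow> key \<Rightarrow> 'k::field"
  assumes F: "\<And>b. finite (supp (F b))" and G: "\<And>b. finite (supp (G b))"
    and x: "finite (supp x)"
  shows "nabla (map_tens F G (Delta x)) = lin (convolution F G) x"
proof (rule fin_linear_eq_on_delta[OF _ fin_linear_lin x])
  let ?T = "\<lambda>(a, b). tens (F a) (G b)"
  have fin_T: "finite (supp (?T p))" for p
    by (cases p) (simp add: finite_supp_tens F G)
  have "fin_linear (\<lambda>x. lin ?T (lin Delta_b x))"
    by (rule fin_linear_comp[OF fin_linear_lin fin_linear_lin])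
       (simp add: finite_supp_lin finite_supp_Delta_b)
  then show "fin_linear (\<lambda>x. nabla (map_tens F G (Delta x)))"
    unfolding nabla_def map_tens_def Delta_def
    by (rule fin_linear_comp[OF fin_linear_lin]) (auto intro!: finite_supp_lin finite_supp_Delta_b finite_supp_tens F G)
  fix b :: key
  obtain w n where b: "b = (w, n)"
    by (cases b)
  show "nabla (map_tens F G (Delta (delta b))) = lin (convolution F G) (delta b)"
    unfolding b Delta_def map_tens_def
    by (simp add: Delta_b_def lin_sum finite_supp_tens F G convolution_eq shmul_def nabla_def)
qed

lemma lin_diff_fun: "lin F x - lin G x = lin (\<lambda>b. F b - G b) (x :: _ \<Rightarrow> 'k::comm_ring)"
  by (simp add: lin_def fun_eq_iff sum_subtractf right_diff_distrib)

lemma convolution_antipode_left: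
  assumes "(w, n) \<in> Wbasis"
  shows "convolution antipode delta (w, n) - unit_counit (w, n) \<in> (I_P :: (key \<Rightarrow> 'k::field) set)"
proof (cases "w = []")
  case True
  then have "convolution antipode delta (w, n) - unit_counit (w, n) = delta ([], n) - (delta ([], 0) :: key \<Rightarrow> 'k)"
    by (simp add: convolution_eq antipode_Nil unit_counit_def shmul_delta_Nil_left)
  then show ?thesis
    by (simp add: delta_diff_in_I_P Wbasis_iff)
next
  case False
  then have "convolution antipode delta (w, n) - unit_counit (w, n)
      = shmul (antipode (w, n)) (delta ([], n)) - (antipode (w, n) :: key \<Rightarrow> 'k)"
    by (simp add: convolution_split_last antipode_nonempty unit_counit_def)
  then show ?thesis
    using assms by (simp add: shmul_delta_Nil_right_congruent antipode_Wsp)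
qed

lemma convolution_delta_antipode_delta:
  assumes "(w, n) \<in> Wbasis"
  shows "convolution (convolution delta antipode) delta (w, n) - delta (w, n) \<in> (I_P :: (key \<Rightarrow> 'k::field) set)"
proof -
  have "convolution (convolution delta antipode) delta (w, n) - (delta (w, n) :: key \<Rightarrow> 'k)
      = convolution delta (convolution antipode delta) (w, n) - convolution delta unit_counit (w, n)"
    by (simp add: convolution_assoc finite_supp_antipode convolution_delta_unit_counit)
  also have "\<dots> = convolution delta (\<lambda>b. convolution antipode delta b - unit_counit b) (w, n)"
    by (rule convolution_diff_right)
       (simp_all add: finite_supp_convolution finite_supp_antipode finite_supp_unit_counit)
  also have "\<dots> \<in> I_P"
    unfolding convolution_eq[of delta] using assms
    by (intro I_P_sum shmul_I_P_right convolution_antipode_left Wsp_delta Wbasis_take Wbasis_drop)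
  finally show ?thesis .
qed

lemma convolution_delta_antipode_in_I_P:
  assumes "(w, n) \<in> Wbasis" "w \<noteq> []"
    and prefixes: "\<And>j. j < length w \<Longrightarrow>
      convolution delta antipode (take j w, n) - unit_counit (take j w, n) \<in> (I_P :: (key \<Rightarrow> 'k::field) set)"
  shows "convolution delta antipode (w, n) \<in> (I_P :: (key \<Rightarrow> 'k) set)"
proof -
  let ?T = "convolution delta antipode :: key \<Rightarrow> key \<Rightarrow> 'k"
  let ?D = "\<lambda>b. ?T b - unit_counit b"
  have T_Wsp: "?T (w, n) \<in> Wsp"
    unfolding convolution_eq using assms(1)
    by (intro Wsp_sum shmul_Wsp Wsp_delta antipode_Wsp Wbasis_take Wbasis_drop)
  have prefix_sum: "(\<Sum>j<length w. shmul (?D (take j w, n)) (delta (drop j w, n))) \<in> I_P"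
    using assms(1) prefixes by (intro I_P_sum shmul_I_P_left Wsp_delta Wbasis_drop) auto
  have "convolution ?T delta (w, n) - delta (w, n) = convolution ?D delta (w, n)"
    using convolution_diff_left[of ?T unit_counit delta "(w, n)"]
    by (simp add: convolution_unit_counit_delta finite_supp_convolution finite_supp_antipode
        finite_supp_unit_counit)
  also have "\<dots> = (\<Sum>j<length w. shmul (?D (take j w, n)) (delta (drop j w, n)))
      + shmul (?T (w, n)) (delta ([], n))"
    using assms(2) by (simp add: convolution_split_last unit_counit_def)
  finally have "?T (w, n) = (convolution ?T delta (w, n) - delta (w, n))
      - (\<Sum>j<length w. shmul (?D (take j w, n)) (delta (drop j w, n)))
      - (shmul (?T (w, n)) (delta ([], n)) - ?T (w, n))"
    by (simp add: algebra_simps)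
  also have "\<dots> \<in> I_P"
    by (rule I_P_diff[OF I_P_diff[OF convolution_delta_antipode_delta[OF assms(1)] prefix_sum]
          shmul_delta_Nil_right_congruent[OF T_Wsp]])
  finally show ?thesis .
qed

lemma convolution_antipode_right:
  "(w, n) \<in> Wbasis \<Longrightarrow> convolution delta antipode (w, n) - unit_counit (w, n) \<in> (I_P :: (key \<Rightarrow> 'k::field) set)"
proof (induction "length w" arbitrary: w rule: less_induct)
  case less
  show ?case
  proof (cases "w = []")
    case True
    then have "convolution delta antipode (w, n) - unit_counit (w, n) = delta ([], n) - (delta ([], 0) :: key \<Rightarrow> 'k)"
      by (simp add: convolution_eq antipode_Nil unit_counit_def shmul_delta_Nil_right)
    then show ?thesis
      by (simp add: delta_diff_in_I_P Wbasis_iff)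
  next
    case False
    have "convolution delta antipode (take j w, n) - unit_counit (take j w, n) \<in> (I_P :: (key \<Rightarrow> 'k) set)"
      if "j < length w" for j
      using that less.prems by (intro less.hyps Wbasis_take) auto
    then have "convolution delta antipode (w, n) \<in> (I_P :: (key \<Rightarrow> 'k) set)"
      using less.prems False by (intro convolution_delta_antipode_in_I_P)
    then show ?thesis
      using False by (simp add: unit_counit_def)
  qed
qed

lemma antipode_identities_mod_I_P:
  assumes x: "x \<in> Wsp"
  shows "nabla (map_tens antipode delta (Delta x)) - iota (eps x) \<in> (I_P :: (key \<Rightarrow> 'k::field) set)"
    and "nabla (map_tens delta antipode (Delta x)) - iota (eps x) \<in> (I_P :: (key \<Rightarrow> 'k::field) set)"
proof -
  have fin: "finite (supp x)"
    using x by (rule finite_supp_Wsp)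
  have "nabla (map_tens antipode delta (Delta x)) - iota (eps x)
      = lin (\<lambda>b. convolution antipode delta b - unit_counit b) x"
    using fin by (simp add: nabla_map_tens_Delta finite_supp_antipode iota_eps_eq_lin lin_diff_fun)
  also have "\<dots> \<in> I_P"
    unfolding I_P_eq_span using fin
    by (rule lin_in_span_fun)
       (metis I_P_eq_span convolution_antipode_left Wsp_supp_Wbasis[OF x] prod.collapse)
  finally show "nabla (map_tens antipode delta (Delta x)) - iota (eps x) \<in> I_P" .
  have "nabla (map_tens delta antipode (Delta x)) - iota (eps x)
      = lin (\<lambda>b. convolution delta antipode b - unit_counit b) x"
    using fin by (simp add: nabla_map_tens_Delta finite_supp_antipode iota_eps_eq_lin lin_diff_fun)
  also have "\<dots> \<in> I_P"
    unfolding I_P_eq_span using fin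
    by (rule lin_in_span_fun)
       (metis I_P_eq_span convolution_antipode_right Wsp_supp_Wbasis[OF x] prod.collapse)
  finally show "nabla (map_tens delta antipode (Delta x)) - iota (eps x) \<in> I_P" .
qed

lemma quotient_graded_hopf_I_P: "quotient_graded_hopf (I_P :: (key \<Rightarrow> 'k::field) set)"
  unfolding quotient_graded_hopf_def
  using antipode_homogeneous lin_antipode_I_P antipode_identities_mod_I_P by blast

theorem proposition3p7:
  shows "homogeneous_subspace (I_P :: (key \<Rightarrow> 'k::field) set) \<and> bi_ideal (I_P :: (key \<Rightarrow> 'k) set)
         \<and> quotient_graded_hopf (I_P :: (key \<Rightarrow> 'k) set)"
  using homogeneous_subspace_I_P bi_ideal_I_P quotient_graded_hopf_I_P by blast

end
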